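(* Let $A$ be a non-zero evolution algebra. Then (i) $A$ is semisimple if and only if $A$ is a non-zero trivial evolution algebra; (ii) $A/\mathrm{Rad}(A)$ is either $\{0\}$ or a non-zero trivial evolution algebra.
   Context: An evolution algebra is an algebra $A$ over $\mathbb{K}\in\{\mathbb{R},\mathbb{C}\}$ with a basis $\{e_i:i\in\Lambda\}$ (natural basis) with $e_ie_j=0$ for $i\neq j$. A non-zero trivial evolution algebra is one having a natural basis with $e_i^2=\omega_{ii}e_i$, $\omega_{ii}\neq0$, for all $i$. An ideal $M$ is modular if some $u\in A$ satisfies $a-au\in M$ for all $a\in A$; $\mathrm{Rad}(A)$ is the intersection of all maximal modular ideals of $A$ (equal to $A$ if there are none), and $A$ is semisimple if $\mathrm{Rad}(A)=\{0\}$. $A/\mathrm{Rad}(A)$ carries the quotient product. *)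

theory Defs
  imports "HOL-Analysis.Analysis"
begin

text \<open>Everything is stated generically in sc and later instantiated
with scaleR (K = real) and scaleC (K = complex).\<close>

definition algebra_product :: "('k::field \<Rightarrow> 'a::ab_group_add \<Rightarrow> 'a) \<Rightarrow> ('a \<Rightarrow> 'a \<Rightarrow> 'a) \<Rightarrow> bool" where
  "algebra_product sc prd \<longleftrightarrow>
     vector_space sc \<and>
     (\<forall>x. Vector_Spaces.linear sc sc (prd x)) \<and>
     (\<forall>y. Vector_Spaces.linear sc sc (\<lambda>x. prd x y))"

definition natural_basis :: "('k::field \<Rightarrow> 'a::ab_group_add \<Rightarrow> 'a) \<Rightarrow> ('a \<Rightarrow> 'a \<Rightarrow> 'a) \<Rightarrow> 'a set \<Rightarrow> bool" where
  "natural_basis sc prd B \<longleftrightarrow>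
     \<not> module.dependent sc B \<and> module.span sc B = UNIV \<and>
     (\<forall>e\<in>B. \<forall>e'\<in>B. e \<noteq> e' \<longrightarrow> prd e e' = 0)"

definition evolution_algebra :: "('k::field \<Rightarrow> 'a::ab_group_add \<Rightarrow> 'a) \<Rightarrow> ('a \<Rightarrow> 'a \<Rightarrow> 'a) \<Rightarrow> bool" where
  "evolution_algebra sc prd \<longleftrightarrow>
     algebra_product sc prd \<and> (\<exists>B. natural_basis sc prd B)"

definition nonzero_trivial_evolution_algebra :: "('k::field \<Rightarrow> 'a::ab_group_add \<Rightarrow> 'a) \<Rightarrow> ('a \<Rightarrow> 'a \<Rightarrow> 'a) \<Rightarrow> bool" where
  "nonzero_trivial_evolution_algebra sc prd \<longleftrightarrow>
     algebra_product sc prd \<and>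
     (\<exists>B. natural_basis sc prd B \<and> (\<forall>e\<in>B. \<exists>w. w \<noteq> 0 \<and> prd e e = sc w e))"

definition alg_ideal :: "('k::field \<Rightarrow> 'a::ab_group_add \<Rightarrow> 'a) \<Rightarrow> ('a \<Rightarrow> 'a \<Rightarrow> 'a) \<Rightarrow> 'a set \<Rightarrow> bool" where
  "alg_ideal sc prd I \<longleftrightarrow>
     module.subspace sc I \<and> (\<forall>a x. x \<in> I \<longrightarrow> prd a x \<in> I \<and> prd x a \<in> I)"

definition modular_ideal :: "('k::field \<Rightarrow> 'a::ab_group_add \<Rightarrow> 'a) \<Rightarrow> ('a \<Rightarrow> 'a \<Rightarrow> 'a) \<Rightarrow> 'a set \<Rightarrow> bool" where
  "modular_ideal sc prd M \<longleftrightarrow>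
     alg_ideal sc prd M \<and> (\<exists>u. \<forall>a. a - prd a u \<in> M)"

definition maximal_modular_ideal :: "('k::field \<Rightarrow> 'a::ab_group_add \<Rightarrow> 'a) \<Rightarrow> ('a \<Rightarrow> 'a \<Rightarrow> 'a) \<Rightarrow> 'a set \<Rightarrow> bool" where
  "maximal_modular_ideal sc prd M \<longleftrightarrow>
     modular_ideal sc prd M \<and> M \<noteq> UNIV \<and>
     (\<forall>J. alg_ideal sc prd J \<and> M \<subseteq> J \<longrightarrow> J = M \<or> J = UNIV)"

text \<open>Intersection of all maximal modular ideals (UNIV if there are none).\<close>
definition Rad :: "('k::field \<Rightarrow> 'a::ab_group_add \<Rightarrow> 'a) \<Rightarrow> ('a \<Rightarrow> 'a \<Rightarrow> 'a) \<Rightarrow> 'a set" where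
  "Rad sc prd = \<Inter> {M. maximal_modular_ideal sc prd M}"

definition semisimple :: "('k::field \<Rightarrow> 'a::ab_group_add \<Rightarrow> 'a) \<Rightarrow> ('a \<Rightarrow> 'a \<Rightarrow> 'a) \<Rightarrow> bool" where
  "semisimple sc prd \<longleftrightarrow> Rad sc prd = {0}"

text \<open>The quotient algebra A/R (R an ideal) described through representatives:
a family B of elements of A whose cosets b + R form a basis of A/R is
"linearly independent modulo R" and "spans modulo R"; the quotient product is
(x + R)(y + R) = x y + R.\<close>
definition independent_mod :: "('k::field \<Rightarrow> 'a::ab_group_add \<Rightarrow> 'a) \<Rightarrow> 'a set \<Rightarrow> 'a set \<Rightarrow> bool" where
  "independent_mod sc R B \<longleftrightarrow>
     (\<forall>S c. finite S \<and> S \<subseteq> B \<and> (\<Sum>s\<in>S. sc (c s) s) \<in> R \<longrightarrow> (\<forall>s\<in>S. c s = 0))"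

definition spans_mod :: "('k::field \<Rightarrow> 'a::ab_group_add \<Rightarrow> 'a) \<Rightarrow> 'a set \<Rightarrow> 'a set \<Rightarrow> bool" where
  "spans_mod sc R B \<longleftrightarrow>
     (\<forall>x. \<exists>S c r. finite S \<and> S \<subseteq> B \<and> r \<in> R \<and> x = (\<Sum>s\<in>S. sc (c s) s) + r)"

text \<open>A/R is a non-zero trivial evolution algebra: there is a natural basis
{b + R : b in B} of A/R (distinct cosets for distinct b) with
(b + R)^2 = w (b + R), w nonzero, for every b in B.\<close>
definition quotient_nonzero_trivial_evolution_algebra ::
  "('k::field \<Rightarrow> 'a::ab_group_add \<Rightarrow> 'a) \<Rightarrow> ('a \<Rightarrow> 'a \<Rightarrow> 'a) \<Rightarrow> 'a set \<Rightarrow> bool" where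
  "quotient_nonzero_trivial_evolution_algebra sc prd R \<longleftrightarrow>
     (\<exists>B. independent_mod sc R B \<and> spans_mod sc R B \<and>
          (\<forall>b\<in>B. \<forall>b'\<in>B. b \<noteq> b' \<longrightarrow> b - b' \<notin> R \<and> prd b b' \<in> R) \<and>
          (\<forall>b\<in>B. \<exists>w. w \<noteq> 0 \<and> prd b b - sc w b \<in> R))"

end

theory Submission
  imports Defs
begin

text \<open>Fix a natural basis \<open>B\<close> and write \<open>x\<^sub>j\<close> for the \<open>j\<close>-th coordinate of \<open>x\<close>.
The product is coordinatewise, \<open>a x = \<Sum>\<^sub>b a\<^sub>b x\<^sub>b e\<^sub>b\<^sup>2\<close>, so the kernel of the coordinate
functional at \<open>j\<close> is an ideal exactly when \<open>j\<close> does not occur in any other square \<open>e\<^sub>k\<^sup>2\<close>,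
and it is moreover modular when \<open>j\<close> occurs in \<open>e\<^sub>j\<^sup>2\<close>; call such \<open>j\<close> isolated.
Conversely, a maximal modular ideal \<open>M\<close> misses some \<open>e\<^sub>j\<close>; its unit forces
\<open>e\<^sub>j\<^sup>2 \<equiv> w e\<^sub>j (mod M)\<close> with \<open>w \<noteq> 0\<close>, so \<open>M + \<bbbk>e\<^sub>j\<close> is an ideal, hence everything,
and multiplying by \<open>e\<^sub>j\<close> shows that all other basis vectors lie in \<open>M\<close>.  Thus the
maximal modular ideals are precisely the coordinate kernels at isolated indices, the
radical consists of the vectors vanishing at all isolated indices, and the isolated
basis vectors form a natural basis of the quotient by the radical on which every
square is a non-zero multiple of the vector itself.  The algebra is semisimple iff
every index is isolated, i.e. iff it is trivial.\<close>

lemma (in module) span_insert_subspace: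
  "subspace M \<Longrightarrow> span (insert j M) = {x. \<exists>t. x - scale t j \<in> M}"
  by (simp add: span_insert span_eq_iff[THEN iffD2])

locale evolution_basis = vector_space scale
  for scale :: "'k::field \<Rightarrow> 'a::ab_group_add \<Rightarrow> 'a" +
  fixes prd :: "'a \<Rightarrow> 'a \<Rightarrow> 'a" and B :: "'a set"
  assumes linear_prd: "\<And>x. Vector_Spaces.linear scale scale (prd x)"
    and linear_prd_left: "\<And>y. Vector_Spaces.linear scale scale (\<lambda>x. prd x y)"
    and independent_B: "independent B"
    and span_B [simp]: "span B = UNIV"
    and prd_basis_distinct: "\<And>e e'. e \<in> B \<Longrightarrow> e' \<in> B \<Longrightarrow> e \<noteq> e' \<Longrightarrow> prd e e' = 0"
begin

abbreviation coord :: "'a \<Rightarrow> 'a \<Rightarrow> 'k" where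
  "coord x b \<equiv> representation B x b"

lemma coord_add [simp]: "coord (x + y) b = coord x b + coord y b"
  by (simp add: representation_add[OF independent_B])

lemma coord_diff [simp]: "coord (x - y) b = coord x b - coord y b"
  by (simp add: representation_diff[OF independent_B])

lemma coord_scale [simp]: "coord (scale c x) b = c * coord x b"
  by (simp add: representation_scale[OF independent_B])

lemma coord_zero [simp]: "coord 0 b = 0"
  by (simp add: representation_zero)

lemma coord_basis: "e \<in> B \<Longrightarrow> coord e b = (if b = e then 1 else 0)"
  by (simp add: representation_basis[OF independent_B])

lemma coord_sum_basis:
  assumes "finite S" "S \<subseteq> B"
  shows "coord (\<Sum>s\<in>S. scale (c s) s) j = (if j \<in> S then c j else 0)"
proof -
  have "coord (\<Sum>s\<in>S. scale (c s) s) j = (\<Sum>s\<in>S. c s * coord s j)"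
    by (simp add: representation_sum[OF independent_B])
  also have "\<dots> = (\<Sum>s\<in>S. if s = j then c j else 0)"
    using assms by (intro sum.cong) (auto simp: coord_basis)
  finally show ?thesis
    using assms(1) by simp
qed

lemma sum_coord_eq:
  assumes "finite S" "{b. coord x b \<noteq> 0} \<subseteq> S"
  shows "(\<Sum>b\<in>S. scale (coord x b) b) = x"
proof -
  have "(\<Sum>b\<in>S. scale (coord x b) b) = (\<Sum>b | coord x b \<noteq> 0. scale (coord x b) b)"
    using assms by (intro sum.mono_neutral_right) auto
  then show ?thesis
    using sum_nonzero_representation_eq[OF independent_B] by simp
qed

lemma coord_eqI:
  assumes "\<And>b. b \<in> B \<Longrightarrow> coord x b = coord y b"
  shows "x = y"
proof -
  have "coord x b = coord y b" for b
    using assms representation_ne_zero by metis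
  then have "coord x = coord y"
    by blast
  then show ?thesis
    by (metis sum_nonzero_representation_eq[OF independent_B] span_B UNIV_I)
qed

lemma module_hom_prd: "module_hom scale scale (prd x)"
  using linear_prd module_hom_iff_linear by blast

lemma module_hom_prd_left: "module_hom scale scale (\<lambda>x. prd x y)"
  using linear_prd_left module_hom_iff_linear by blast

lemma prd_basis_right:
  assumes e: "e \<in> B"
  shows "prd a e = scale (coord a e) (prd e e)"
proof -
  let ?S = "insert e {b. coord a b \<noteq> 0}"
  have fin: "finite ?S"
    using finite_representation by simp
  have "prd a e = prd (\<Sum>b\<in>?S. scale (coord a b) b) e"
    by (simp add: sum_coord_eq[OF fin subset_insertI])
  also have "\<dots> = (\<Sum>b\<in>?S. scale (coord a b) (prd b e))"
    by (simp add: module_hom.sum[OF module_hom_prd_left] module_hom.scale[OF module_hom_prd_left])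
  also have "\<dots> = (\<Sum>b\<in>?S. if b = e then scale (coord a e) (prd e e) else 0)"
    by (intro sum.cong) (auto simp: prd_basis_distinct e dest: representation_ne_zero)
  finally show ?thesis
    using fin by simp
qed

lemma prd_eq_sum_squares:
  assumes "finite S" "{b. coord x b \<noteq> 0} \<subseteq> S"
  shows "prd a x = (\<Sum>b\<in>S. scale (coord a b * coord x b) (prd b b))"
proof -
  have "prd a x = prd a (\<Sum>b\<in>S. scale (coord x b) b)"
    by (simp add: sum_coord_eq[OF assms])
  also have "\<dots> = (\<Sum>b\<in>S. scale (coord x b) (prd a b))"
    by (simp add: module_hom.sum[OF module_hom_prd] module_hom.scale[OF module_hom_prd])
  also have "\<dots> = (\<Sum>b\<in>S. scale (coord a b * coord x b) (prd b b))"
  proof (rule sum.cong[OF refl])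
    fix b
    show "scale (coord x b) (prd a b) = scale (coord a b * coord x b) (prd b b)"
      using representation_ne_zero[of B x b]
      by (cases "coord x b = 0") (auto simp: prd_basis_right[of b a] mult.commute)
  qed
  finally show ?thesis .
qed

lemma prd_commute: "prd x y = prd y x"
proof -
  let ?S = "{b. coord x b \<noteq> 0} \<union> {b. coord y b \<noteq> 0}"
  have fin: "finite ?S"
    using finite_representation by simp
  have "prd x y = (\<Sum>b\<in>?S. scale (coord x b * coord y b) (prd b b))"
    using fin by (rule prd_eq_sum_squares) auto
  also have "\<dots> = prd y x"
    using fin by (subst prd_eq_sum_squares[of ?S]) (auto simp: mult.commute)
  finally show ?thesis .
qed

lemma prd_basis_left: "e \<in> B \<Longrightarrow> prd e a = scale (coord a e) (prd e e)"
  by (metis prd_commute prd_basis_right)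

definition coord_kernel :: "'a \<Rightarrow> 'a set" where
  "coord_kernel j = {x. coord x j = 0}"

lemma subspace_coord_kernel: "subspace (coord_kernel j)"
  by (simp add: subspace_def coord_kernel_def)

lemma coord_kernel_maximal_subspace:
  assumes J: "subspace J" "coord_kernel j \<subseteq> J"
  shows "J = coord_kernel j \<or> J = UNIV"
proof (cases "J = coord_kernel j")
  case False
  then obtain y where y: "y \<in> J" "coord y j \<noteq> 0"
    using J(2) by (auto simp: coord_kernel_def)
  have "x \<in> J" for x
  proof -
    let ?c = "coord x j / coord y j"
    have "x - scale ?c y \<in> J"
      using y J(2) by (auto simp: coord_kernel_def)
    moreover have "scale ?c y \<in> J"
      using subspace_scale[OF J(1) y(1)] .
    ultimately have "(x - scale ?c y) + scale ?c y \<in> J"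
      by (rule subspace_add[OF J(1)])
    then show ?thesis
      by simp
  qed
  then show ?thesis
    by auto
qed simp

lemma ideal_coord_kernel:
  assumes other_squares: "\<And>k. k \<in> B \<Longrightarrow> k \<noteq> j \<Longrightarrow> coord (prd k k) j = 0"
  shows "alg_ideal scale prd (coord_kernel j)"
proof -
  have right: "prd a x \<in> coord_kernel j" if x: "x \<in> coord_kernel j" for a x
  proof -
    let ?S = "{b. coord x b \<noteq> 0}"
    have "prd a x = (\<Sum>b\<in>?S. scale (coord a b * coord x b) (prd b b))"
      by (rule prd_eq_sum_squares) (simp_all add: finite_representation)
    also have "\<dots> \<in> coord_kernel j"
    proof (rule subspace_sum[OF subspace_coord_kernel])
      fix b assume "b \<in> ?S"
      then have "b \<in> B" "b \<noteq> j"
        using x representation_ne_zero by (auto simp: coord_kernel_def)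
      then show "scale (coord a b * coord x b) (prd b b) \<in> coord_kernel j"
        using other_squares by (simp add: coord_kernel_def)
    qed
    finally show ?thesis .
  qed
  moreover have "prd x a \<in> coord_kernel j" if "x \<in> coord_kernel j" for a x
    using right[OF that, of a] prd_commute[of x a] by simp
  ultimately show ?thesis
    using subspace_coord_kernel by (simp add: alg_ideal_def)
qed

definition isolated :: "'a set" where
  "isolated = {j\<in>B. coord (prd j j) j \<noteq> 0 \<and> (\<forall>k\<in>B. k \<noteq> j \<longrightarrow> coord (prd k k) j = 0)}"

lemma isolated_subset_B: "isolated \<subseteq> B"
  by (auto simp: isolated_def)

lemma maximal_modular_ideal_coord_kernel:
  assumes j: "j \<in> isolated"
  shows "maximal_modular_ideal scale prd (coord_kernel j)"
proof -
  have jB: "j \<in> B" and w: "coord (prd j j) j \<noteq> 0"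
    and others: "\<And>k. k \<in> B \<Longrightarrow> k \<noteq> j \<Longrightarrow> coord (prd k k) j = 0"
    using j by (auto simp: isolated_def)
  define u where "u = scale (inverse (coord (prd j j) j)) j"
  have "coord (prd a u) j = coord a j" for a
    using w by (simp add: u_def module_hom.scale[OF module_hom_prd] prd_basis_right[OF jB, of a])
  then have "modular_ideal scale prd (coord_kernel j)"
    using ideal_coord_kernel[OF others] unfolding modular_ideal_def coord_kernel_def
    by (metis (mono_tags) diff_self mem_Collect_eq coord_diff)
  moreover have "j \<notin> coord_kernel j"
    using jB by (simp add: coord_kernel_def coord_basis)
  ultimately show ?thesis
    using coord_kernel_maximal_subspace unfolding maximal_modular_ideal_def alg_ideal_def
    by blast
qed

lemma modular_unit_square:
  assumes M: "subspace M" and unit: "\<And>a. a - prd a u \<in> M"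
    and j: "j \<in> B" "j \<notin> M"
  shows "coord u j \<noteq> 0" and "prd j j - scale (inverse (coord u j)) j \<in> M"
proof -
  have jM: "j - scale (coord u j) (prd j j) \<in> M"
    using unit[of j] j(1) by (simp add: prd_basis_left[OF j(1), of u])
  then show c: "coord u j \<noteq> 0"
    using j(2) by auto
  have "prd j j - scale (inverse (coord u j)) j
          = scale (- inverse (coord u j)) (j - scale (coord u j) (prd j j))"
    using c by (simp add: scale_right_diff_distrib)
  then show "prd j j - scale (inverse (coord u j)) j \<in> M"
    using subspace_scale[OF M jM, of "- inverse (coord u j)"] by simp
qed

lemma ideal_span_insert_basis:
  assumes M: "alg_ideal scale prd M" and j: "j \<in> B" and sq: "prd j j - scale w j \<in> M"
  shows "alg_ideal scale prd (span (insert j M))"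
proof -
  have sM: "subspace M"
    using M by (simp add: alg_ideal_def)
  note span = span_insert_subspace[OF sM]
  have right: "prd a x \<in> span (insert j M)" if x: "x \<in> span (insert j M)" for a x
  proof -
    obtain t where m: "x - scale t j \<in> M"
      using x span by auto
    let ?m = "x - scale t j" and ?s = "t * coord a j"
    have "prd a x = prd a ?m + scale ?s (prd j j)"
      by (simp add: module_hom.diff[OF module_hom_prd] module_hom.scale[OF module_hom_prd]
          prd_basis_right[OF j, of a])
    then have "prd a x - scale (?s * w) j = prd a ?m + scale ?s (prd j j - scale w j)"
      by (simp add: scale_right_diff_distrib)
    also have "\<dots> \<in> M"
      using m M sq sM by (simp add: alg_ideal_def subspace_add subspace_scale)
    finally show ?thesis
      unfolding span by blast
  qed
  moreover have "prd x a \<in> span (insert j M)" if "x \<in> span (insert j M)" for a x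
    using right[OF that, of a] prd_commute[of x a] by simp
  ultimately show ?thesis
    by (simp add: alg_ideal_def)
qed

lemma basis_mem_maximal_modular_ideal:
  assumes M: "maximal_modular_ideal scale prd M"
    and j: "j \<in> B" "j \<notin> M" and w: "w \<noteq> 0" and sq: "prd j j - scale w j \<in> M"
    and k: "k \<in> B" "k \<noteq> j"
  shows "k \<in> M"
proof -
  have ideal: "alg_ideal scale prd M" and sM: "subspace M"
    and max: "\<And>J. alg_ideal scale prd J \<Longrightarrow> M \<subseteq> J \<Longrightarrow> J = M \<or> J = UNIV"
    using M by (auto simp: maximal_modular_ideal_def modular_ideal_def alg_ideal_def)
  have "span (insert j M) = UNIV"
    using max[OF ideal_span_insert_basis[OF ideal j(1) sq]] span_superset j(2) by blast
  then have "k \<in> span (insert j M)"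
    by simp
  then obtain t where m: "k - scale t j \<in> M"
    using span_insert_subspace[OF sM] by auto
  let ?p = "prd (k - scale t j) j"
  have zero: "?p + scale t (prd j j) = 0"
    using prd_basis_distinct[OF k(1) j(1) k(2)]
    by (simp add: module_hom.diff[OF module_hom_prd_left] module_hom.scale[OF module_hom_prd_left])
  have "- (?p + scale t (prd j j - scale w j)) = scale (t * w) j - (?p + scale t (prd j j))"
    by (simp add: scale_right_diff_distrib algebra_simps)
  then have "scale (t * w) j = - (?p + scale t (prd j j - scale w j))"
    using zero by simp
  also have "\<dots> \<in> M"
  proof -
    have "?p \<in> M"
      using ideal m by (simp add: alg_ideal_def)
    then have "?p + scale t (prd j j - scale w j) \<in> M"
      using sq sM by (simp add: subspace_add subspace_scale)
    then show ?thesis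
      by (rule subspace_neg[OF sM])
  qed
  finally have "scale (inverse (t * w)) (scale (t * w) j) \<in> M"
    by (rule subspace_scale[OF sM])
  then have "t = 0"
    using j(2) w by (cases "t = 0") (auto simp: field_simps)
  then show ?thesis
    using m by simp
qed

lemma maximal_modular_ideal_eq_coord_kernel:
  assumes M: "maximal_modular_ideal scale prd M"
  shows "\<exists>j\<in>isolated. M = coord_kernel j"
proof -
  have sM: "subspace M" and closed: "\<And>a x. x \<in> M \<Longrightarrow> prd x a \<in> M"
    and proper: "M \<noteq> UNIV"
    using M by (auto simp: maximal_modular_ideal_def modular_ideal_def alg_ideal_def)
  obtain u where unit: "\<And>a. a - prd a u \<in> M"
    using M by (auto simp: maximal_modular_ideal_def modular_ideal_def)
  have "\<not> B \<subseteq> M"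
  proof
    assume "B \<subseteq> M"
    then have "span B \<subseteq> M"
      by (rule span_minimal[OF _ sM])
    with proper show False
      by auto
  qed
  then obtain j where j: "j \<in> B" "j \<notin> M"
    by blast
  define w where "w = inverse (coord u j)"
  have w: "w \<noteq> 0" and sq: "prd j j - scale w j \<in> M"
    using modular_unit_square[OF sM unit j] by (simp_all add: w_def)
  have others: "k \<in> M" if "k \<in> B" "k \<noteq> j" for k
    using basis_mem_maximal_modular_ideal[OF M j w sq that] .
  have "x \<in> M" if x: "x \<in> coord_kernel j" for x
  proof -
    have "(\<Sum>b | coord x b \<noteq> 0. scale (coord x b) b) \<in> M"
    proof (rule subspace_sum[OF sM])
      fix b assume "b \<in> {b. coord x b \<noteq> 0}"
      then have "b \<in> B" "b \<noteq> j"
        using x representation_ne_zero by (auto simp: coord_kernel_def)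
      then show "scale (coord x b) b \<in> M"
        using others subspace_scale[OF sM] by blast
    qed
    then show ?thesis
      by (simp add: sum_coord_eq[OF finite_representation order_refl])
  qed
  then have M_eq: "M = coord_kernel j"
    using coord_kernel_maximal_subspace[OF sM] proper by blast
  have "coord (prd j j) j = w"
    using sq j(1) by (simp add: M_eq coord_kernel_def coord_basis)
  moreover have "coord (prd k k) j = 0" if "k \<in> B" "k \<noteq> j" for k
    using closed[OF others[OF that]] by (simp add: M_eq coord_kernel_def)
  ultimately have "j \<in> isolated"
    using j(1) w by (simp add: isolated_def)
  with M_eq show ?thesis
    by blast
qed

lemma Rad_eq_isolated_coords: "Rad scale prd = {x. \<forall>j\<in>isolated. coord x j = 0}"
proof -
  have "{M. maximal_modular_ideal scale prd M} = coord_kernel ` isolated"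
    using maximal_modular_ideal_coord_kernel maximal_modular_ideal_eq_coord_kernel by auto
  then show ?thesis
    by (auto simp: Rad_def coord_kernel_def)
qed

lemma isolated_eq_B_iff_trivial:
  "isolated = B \<longleftrightarrow> (\<forall>e\<in>B. \<exists>w. w \<noteq> 0 \<and> prd e e = scale w e)"
proof
  assume iso: "isolated = B"
  show "\<forall>e\<in>B. \<exists>w. w \<noteq> 0 \<and> prd e e = scale w e"
  proof
    fix e assume e: "e \<in> B"
    then have w: "coord (prd e e) e \<noteq> 0"
      using iso by (auto simp: isolated_def)
    have "prd e e = scale (coord (prd e e) e) e"
    proof (rule coord_eqI)
      fix b assume b: "b \<in> B"
      show "coord (prd e e) b = coord (scale (coord (prd e e) e) e) b"
      proof (cases "b = e")
        case False
        then have "coord (prd e e) b = 0"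
          using iso b e by (auto simp: isolated_def)
        then show ?thesis
          using e False by (simp add: coord_basis)
      qed (simp add: coord_basis e)
    qed
    with w show "\<exists>w. w \<noteq> 0 \<and> prd e e = scale w e"
      by blast
  qed
next
  assume triv: "\<forall>e\<in>B. \<exists>w. w \<noteq> 0 \<and> prd e e = scale w e"
  have "coord (prd e e) j = 0 \<longleftrightarrow> j \<noteq> e" if e: "e \<in> B" for e j
  proof -
    obtain w where "w \<noteq> 0" "prd e e = scale w e"
      using triv e by blast
    then show ?thesis
      using e by (simp add: coord_basis)
  qed
  then show "isolated = B"
    by (auto simp: isolated_def)
qed

lemma Rad_eq_0_iff: "Rad scale prd = {0} \<longleftrightarrow> isolated = B"
proof
  assume R: "Rad scale prd = {0}"
  have "0 \<notin> B"
    using independent_B dependent_zero by blast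
  have "j \<in> isolated" if j: "j \<in> B" for j
  proof (rule ccontr)
    assume "j \<notin> isolated"
    then have "j \<in> Rad scale prd"
      using j by (auto simp: Rad_eq_isolated_coords coord_basis)
    with R \<open>0 \<notin> B\<close> j show False
      by auto
  qed
  then show "isolated = B"
    using isolated_subset_B by blast
next
  assume iso: "isolated = B"
  have "x = 0" if "x \<in> Rad scale prd" for x
    using that by (intro coord_eqI) (simp add: Rad_eq_isolated_coords iso)
  then show "Rad scale prd = {0}"
    by (auto simp: Rad_eq_isolated_coords)
qed

lemma semisimple_iff_trivial_basis:
  "semisimple scale prd \<longleftrightarrow> (\<forall>e\<in>B. \<exists>w. w \<noteq> 0 \<and> prd e e = scale w e)"
  by (simp add: semisimple_def Rad_eq_0_iff isolated_eq_B_iff_trivial)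

text \<open>No hypothesis is needed: without isolated indices the radical is everything and
the empty family is a basis of the zero quotient.\<close>

lemma quotient_Rad_trivial:
  "quotient_nonzero_trivial_evolution_algebra scale prd (Rad scale prd)"
proof -
  let ?R = "Rad scale prd"
  note Rad = Rad_eq_isolated_coords and iso_B = isolated_subset_B
  have "independent_mod scale ?R isolated"
    unfolding independent_mod_def
  proof (intro allI impI ballI)
    fix S c s
    assume S: "finite S \<and> S \<subseteq> isolated \<and> (\<Sum>s\<in>S. scale (c s) s) \<in> ?R" and s: "s \<in> S"
    then have "coord (\<Sum>s\<in>S. scale (c s) s) s = 0"
      by (auto simp: Rad)
    moreover have "S \<subseteq> B"
      using S iso_B by blast
    ultimately show "c s = 0"
      using S s by (simp add: coord_sum_basis)
  qed
  moreover have "spans_mod scale ?R isolated"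
    unfolding spans_mod_def
  proof
    fix x
    let ?S = "{b\<in>isolated. coord x b \<noteq> 0}" and ?y = "\<Sum>s\<in>{b\<in>isolated. coord x b \<noteq> 0}. scale (coord x s) s"
    have S: "finite ?S" "?S \<subseteq> B"
      using finite_representation iso_B by (auto intro: finite_subset[rotated])
    then have "x - ?y \<in> ?R"
      by (auto simp: Rad coord_sum_basis)
    moreover have "x = ?y + (x - ?y)"
      by simp
    ultimately show "\<exists>S c r. finite S \<and> S \<subseteq> isolated \<and> r \<in> ?R \<and> x = (\<Sum>s\<in>S. scale (c s) s) + r"
      using S(1) by blast
  qed
  moreover have "b - b' \<notin> ?R \<and> prd b b' \<in> ?R"
    if b: "b \<in> isolated" "b' \<in> isolated" "b \<noteq> b'" for b b'
  proof
    have "b \<in> B" "b' \<in> B"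
      using b iso_B by auto
    then have "coord (b - b') b = 1"
      using b(3) by (simp add: coord_basis)
    then show "b - b' \<notin> ?R"
      using b(1) unfolding Rad by force
    show "prd b b' \<in> ?R"
      using prd_basis_distinct[OF \<open>b \<in> B\<close> \<open>b' \<in> B\<close> b(3)] by (simp add: Rad)
  qed
  moreover have "prd b b - scale (coord (prd b b) b) b \<in> ?R" if b: "b \<in> isolated" for b
    using b iso_B by (auto simp: Rad isolated_def coord_basis)
  moreover have "coord (prd b b) b \<noteq> 0" if "b \<in> isolated" for b
    using that by (simp add: isolated_def)
  ultimately show ?thesis
    unfolding quotient_nonzero_trivial_evolution_algebra_def by blast
qed

end

lemma evolution_basisI:
  assumes "algebra_product sc prd" "natural_basis sc prd B"
  shows "evolution_basis sc prd B"
  using assms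
  by (simp add: evolution_basis_def evolution_basis_axioms_def algebra_product_def natural_basis_def)

lemma semisimple_iff_nonzero_trivial_evolution_algebra:
  assumes "evolution_algebra sc prd"
  shows "semisimple sc prd \<longleftrightarrow> nonzero_trivial_evolution_algebra sc prd"
proof -
  obtain B where ap: "algebra_product sc prd" and nb: "natural_basis sc prd B"
    using assms by (auto simp: evolution_algebra_def)
  note semisimple_iff = evolution_basis.semisimple_iff_trivial_basis[OF evolution_basisI[OF ap]]
  show ?thesis
  proof
    assume "semisimple sc prd"
    then show "nonzero_trivial_evolution_algebra sc prd"
      using ap nb semisimple_iff[OF nb] by (auto simp: nonzero_trivial_evolution_algebra_def)
  next
    assume "nonzero_trivial_evolution_algebra sc prd"
    then show "semisimple sc prd"
      using semisimple_iff by (auto simp: nonzero_trivial_evolution_algebra_def)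
  qed
qed

lemma quotient_Rad_nonzero_trivial_evolution_algebra:
  assumes "evolution_algebra sc prd"
  shows "quotient_nonzero_trivial_evolution_algebra sc prd (Rad sc prd)"
proof -
  obtain B where "algebra_product sc prd" "natural_basis sc prd B"
    using assms by (auto simp: evolution_algebra_def)
  then interpret evolution_basis sc prd B
    by (rule evolution_basisI)
  show ?thesis
    by (rule quotient_Rad_trivial)
qed

theorem corollary3p14:
  fixes scR :: "real \<Rightarrow> 'a::ab_group_add \<Rightarrow> 'a" and multR :: "'a \<Rightarrow> 'a \<Rightarrow> 'a"
    and scC :: "complex \<Rightarrow> 'b::ab_group_add \<Rightarrow> 'b" and multC :: "'b \<Rightarrow> 'b \<Rightarrow> 'b"
  shows "(evolution_algebra scR multR \<and> (\<exists>x::'a. x \<noteq> 0) \<longrightarrow>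
            (semisimple scR multR \<longleftrightarrow> nonzero_trivial_evolution_algebra scR multR) \<and>
            (Rad scR multR = UNIV \<or>
             quotient_nonzero_trivial_evolution_algebra scR multR (Rad scR multR)))
       \<and> (evolution_algebra scC multC \<and> (\<exists>x::'b. x \<noteq> 0) \<longrightarrow>
            (semisimple scC multC \<longleftrightarrow> nonzero_trivial_evolution_algebra scC multC) \<and>
            (Rad scC multC = UNIV \<or>
             quotient_nonzero_trivial_evolution_algebra scC multC (Rad scC multC)))"
  by (simp add: semisimple_iff_nonzero_trivial_evolution_algebra
      quotient_Rad_nonzero_trivial_evolution_algebra)

end
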